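(* Let $K$ be a Cantor set with metric $d$. For every endomorphism $T:K\to K$ and every $\varepsilon>0$ there exists an endomorphism $\widetilde T:K\to K$ such that $D(T,\widetilde T)=\max_{x\in K} d(T(x),\widetilde T(x))<\varepsilon$ and the orbit of every point of $K$ under $\widetilde T$ is finally periodic.
   Context: A Cantor set is a nonempty totally disconnected, perfect, compact metric space. An endomorphism of $K$ is a continuous surjection $K\to K$. The orbit of $x\in K$ under a map $S$ is finally periodic if there exist integers $j,N>0$ with $S^{N+j}(x)=S^{j}(x)$. *)

theory Defs
  imports "HOL-Analysis.Analysis"
begin

definition totally_disconnected_set :: "'a::topological_space set \<Rightarrow> bool" where
  "totally_disconnected_set K \<longleftrightarrow> (\<forall>C. C \<subseteq> K \<and> connected C \<longrightarrow> (\<exists>a. C \<subseteq> {a}))"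

definition perfect_set :: "'a::topological_space set \<Rightarrow> bool" where
  "perfect_set K \<longleftrightarrow> closed K \<and> (\<forall>x\<in>K. x islimpt K)"

definition cantor_set :: "'a::metric_space set \<Rightarrow> bool" where
  "cantor_set K \<longleftrightarrow> K \<noteq> {} \<and> totally_disconnected_set K \<and> perfect_set K \<and> compact K"

definition endomorphism :: "'a::topological_space set \<Rightarrow> ('a \<Rightarrow> 'a) \<Rightarrow> bool" where
  "endomorphism K T \<longleftrightarrow> continuous_on K T \<and> T ` K = K"

definition finally_periodic :: "('a \<Rightarrow> 'a) \<Rightarrow> 'a \<Rightarrow> bool" where
  "finally_periodic S x \<longleftrightarrow> (\<exists>j N::nat. j > 0 \<and> N > 0 \<and> (S ^^ (N + j)) x = (S ^^ j) x)"

end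

theory Submission
  imports Defs
begin

definition clopen_in :: "'a::topological_space set \<Rightarrow> 'a set \<Rightarrow> bool" where
  "clopen_in K C \<longleftrightarrow> openin (top_of_set K) C \<and> closedin (top_of_set K) C"

lemma clopen_in_subset: "clopen_in K C \<Longrightarrow> C \<subseteq> K"
  by (auto simp: clopen_in_def dest: openin_imp_subset)

lemma clopen_in_Diff: "clopen_in K A \<Longrightarrow> clopen_in K B \<Longrightarrow> clopen_in K (A - B)"
  by (simp add: clopen_in_def openin_diff closedin_diff)

lemma clopen_in_closed: "clopen_in K C \<Longrightarrow> closed K \<Longrightarrow> closed C"
  by (simp add: clopen_in_def closedin_closed_eq)

lemma clopen_in_open_trace:
  assumes "clopen_in K C"
  obtains W where "open W" "C = K \<inter> W"
  using assms by (auto simp: clopen_in_def openin_open)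

lemma cantor_set_clopen_in:
  assumes K: "cantor_set K" and C: "clopen_in K C" "C \<noteq> {}"
  shows "cantor_set C"
proof -
  have "closed C"
    using C(1) K clopen_in_closed compact_imp_closed by (auto simp: cantor_set_def)
  moreover obtain W where W: "open W" "C = K \<inter> W"
    using C(1) by (rule clopen_in_open_trace)
  moreover have "x islimpt C" if "x \<in> C" for x
  proof -
    have "x islimpt K" "x \<in> W"
      using K that W unfolding cantor_set_def perfect_set_def by auto
    then show ?thesis
      using W by (metis at_within_nhd inf_right_idem trivial_limit_within)
  qed
  ultimately have "perfect_set C"
    by (simp add: perfect_set_def)
  moreover have "compact C"
    using K \<open>closed C\<close> W(2) by (metis cantor_set_def compact_Int_closed inf.absorb_iff2 inf_le1)
  moreover have "totally_disconnected_set C"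
    using K W(2) unfolding cantor_set_def totally_disconnected_set_def by blast
  ultimately show ?thesis
    using C(2) by (simp add: cantor_set_def)
qed

lemma clopen_in_nbhd:
  fixes K :: "'a::metric_space set"
  assumes K: "compact K" "totally_disconnected_set K" and x: "x \<in> K" and U: "open U" "x \<in> U"
  obtains C where "clopen_in K C" "x \<in> C" "C \<subseteq> U"
proof -
  let ?X = "top_of_set K"
  have cs: "compact_space ?X"
    using K(1) by (simp add: compact_space_subtopology)
  have "connectedin ?X (connected_component_of_set ?X x)"
    by (simp add: connectedin_connected_component_of)
  then have "connected (connected_component_of_set ?X x)" "connected_component_of_set ?X x \<subseteq> K"
    by (simp_all add: connectedin_subtopology)
  then obtain a where "connected_component_of_set ?X x \<subseteq> {a}"
    using K(2) unfolding totally_disconnected_set_def by blast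
  moreover have "x \<in> connected_component_of_set ?X x"
    using x by (simp add: connected_component_of_refl)
  ultimately have "connected_component_of_set ?X x = {x}"
    by blast
  moreover have "quasi_component_of ?X x = connected_component_of ?X x"
    by (intro quasi_eq_connected_component_of) (simp_all add: cs Hausdorff_space_subtopology)
  ultimately have qc: "{x} \<in> quasi_components_of ?X"
    unfolding quasi_components_of_def using x by (intro image_eqI[of _ _ x]) auto
  have "closedin ?X (K \<inter> - U)"
    using U(1) by (intro closedin_closed_Int) auto
  then have "compactin ?X (K - U)"
    using cs by (simp add: Diff_eq closedin_compact_space)
  then have "separated_between ?X {x} (K - U)"
    using separated_between_quasi_component_compact[OF qc] U(2) by (simp add: disjnt_def)
  then obtain A B where AB: "openin ?X A" "openin ?X B" "A \<union> B = K" "disjnt A B"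
      "{x} \<subseteq> A" "K - U \<subseteq> B"
    unfolding separated_between_def by auto
  have "A = K - B"
    using AB by (auto simp: disjnt_def)
  then have "clopen_in K A"
    using AB(1,2) by (simp add: clopen_in_def closedin_diff)
  moreover have "A \<subseteq> U"
    using AB by (auto simp: disjnt_def)
  ultimately show ?thesis
    using AB(5) that by blast
qed

lemma clopen_in_proper_nbhd:
  fixes K :: "'a::metric_space set"
  assumes K: "cantor_set K" and V: "clopen_in K V" "a \<in> V" and r: "r > 0"
  obtains C where "clopen_in K C" "a \<in> C" "C \<subseteq> V \<inter> ball a r" "C \<noteq> V"
proof -
  obtain W where W: "open W" "V = K \<inter> W"
    using V(1) by (rule clopen_in_open_trace)
  have "a islimpt K" "a \<in> K" "a \<in> W \<inter> ball a r"
    using K V W r unfolding cantor_set_def perfect_set_def by auto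
  then obtain b where b: "b \<in> K" "b \<in> W \<inter> ball a r" "b \<noteq> a"
    using W(1) unfolding islimpt_def by (meson open_Int open_ball)
  have "open (W \<inter> ball a r - {b})" "a \<in> W \<inter> ball a r - {b}"
    using W(1) \<open>a \<in> W \<inter> ball a r\<close> b(3) by auto
  then obtain C where C: "clopen_in K C" "a \<in> C" "C \<subseteq> W \<inter> ball a r - {b}"
    using K \<open>a \<in> K\<close> clopen_in_nbhd unfolding cantor_set_def by metis
  have "C \<subseteq> V \<inter> ball a r" "b \<in> V - C"
    using C clopen_in_subset[OF C(1)] W b by auto
  then show ?thesis
    using that C(1,2) by blast
qed

definition clopen_partition ::
    "'a::topological_space set \<Rightarrow> 'a set \<Rightarrow> ('i \<Rightarrow> 'a set) \<Rightarrow> 'i set \<Rightarrow> bool" where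
  "clopen_partition K U c I \<longleftrightarrow>
     (\<forall>i\<in>I. clopen_in K (c i) \<and> c i \<noteq> {}) \<and> disjoint_family_on c I \<and> (\<Union>i\<in>I. c i) = U"

lemma clopen_partition_reindex:
  assumes "clopen_partition K U c J" "bij_betw e I J"
  shows "clopen_partition K U (c \<circ> e) I"
proof -
  have "(\<Union>i\<in>I. c (e i)) = (\<Union>j\<in>e ` I. c j)"
    by simp
  moreover have "disjoint_family_on (c \<circ> e) I"
    using assms unfolding clopen_partition_def disjoint_family_on_def bij_betw_def inj_on_def
    by (metis comp_apply image_eqI)
  ultimately show ?thesis
    using assms unfolding clopen_partition_def bij_betw_def by auto
qed

lemma clopen_partition_finite:
  fixes K :: "'a::metric_space set"
  assumes K: "cantor_set K" and U: "clopen_in K U" "U \<noteq> {}" and I: "finite I" "I \<noteq> {}"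
  shows "\<exists>c. clopen_partition K U c I"
  using I U
proof (induction I arbitrary: U rule: finite_ne_induct)
  case (singleton i)
  then show ?case
    by (intro exI[of _ "\<lambda>_. U"]) (simp add: clopen_partition_def disjoint_family_on_def)
next
  case (insert i I)
  obtain a where "a \<in> U"
    using insert.prems by blast
  then obtain C where C: "clopen_in K C" "a \<in> C" "C \<subseteq> U" "C \<noteq> U"
    using insert.prems(1) by (elim clopen_in_proper_nbhd[OF K, of U a 1]) auto
  then have "clopen_in K (U - C)" "U - C \<noteq> {}"
    using insert.prems(1) by (auto intro: clopen_in_Diff)
  then obtain c where c: "clopen_partition K (U - C) c I"
    using insert.IH by blast
  have "(\<Union>j\<in>I. (c(i := C)) j) = U - C"
    using c insert.hyps unfolding clopen_partition_def by auto
  then have "(\<Union>j\<in>insert i I. (c(i := C)) j) = U"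
    using C(3) insert.hyps by auto
  moreover have "c j \<subseteq> U - C" if "j \<in> I" for j
    using c that unfolding clopen_partition_def by blast
  ultimately have "clopen_partition K U (c(i := C)) (insert i I)"
    using c C insert.hyps unfolding clopen_partition_def disjoint_family_on_def by auto
  then show ?case
    by blast
qed

lemma clopen_partition_punctured_nat:
  fixes K :: "'a::metric_space set"
  assumes K: "cantor_set K" and U: "clopen_in K U" "a \<in> U"
  obtains D :: "nat \<Rightarrow> 'a set"
  where "clopen_partition K (U - {a}) D UNIV" "\<And>r. r > 0 \<Longrightarrow> finite {m. \<not> D m \<subseteq> ball a r}"
proof -
  have step: "\<exists>C'. (clopen_in K C' \<and> a \<in> C' \<and> (Suc m = 0 \<longrightarrow> C' = U))
      \<and> C' \<subset> C \<and> C' \<subseteq> ball a (inverse (Suc m))"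
    if C: "clopen_in K C \<and> a \<in> C \<and> (m = 0 \<longrightarrow> C = U)" for C and m :: nat
  proof -
    have "clopen_in K C" "a \<in> C" "inverse (Suc m) > 0"
      using C by simp_all
    then obtain C' where "clopen_in K C'" "a \<in> C'" "C' \<subseteq> C \<inter> ball a (inverse (Suc m))" "C' \<noteq> C"
      by (rule clopen_in_proper_nbhd[OF K])
    then show ?thesis
      by blast
  qed
  have "\<exists>N. \<forall>m. (clopen_in K (N m) \<and> a \<in> N m \<and> (m = 0 \<longrightarrow> N m = U))
      \<and> N (Suc m) \<subset> N m \<and> N (Suc m) \<subseteq> ball a (inverse (Suc m))"
  proof (rule dependent_nat_choice[of "\<lambda>m C. clopen_in K C \<and> a \<in> C \<and> (m = 0 \<longrightarrow> C = U)"
        "\<lambda>m C C'. C' \<subset> C \<and> C' \<subseteq> ball a (inverse (Suc m))"])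
    show "\<exists>C. clopen_in K C \<and> a \<in> C \<and> (0 = 0 \<longrightarrow> C = U)"
      using U by blast
  qed (rule step)
  then obtain N where N: "\<And>m. clopen_in K (N m)" "\<And>m. a \<in> N m" "N 0 = U"
      "\<And>m. N (Suc m) \<subset> N m" "\<And>m. N (Suc m) \<subseteq> ball a (inverse (Suc m))"
    by (metis (no_types, lifting))
  have antimono: "N n \<subseteq> N m" if "m \<le> n" for m n
    using lift_Suc_antimono_le[of N, OF _ that] N(4) by (simp add: less_imp_le)
  define D where "D m = N m - N (Suc m)" for m
  have "clopen_in K (D m) \<and> D m \<noteq> {}" for m
    using clopen_in_Diff[OF N(1) N(1)] N(4)[of m] unfolding D_def by blast
  moreover have "D m \<inter> D n = {}" if "m < n" for m n
    using antimono[of "Suc m" n] that unfolding D_def by auto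
  then have "disjoint_family D"
    unfolding disjoint_family_on_def by (metis inf_commute linorder_neqE_nat)
  moreover have "(\<Union>m. D m) = U - {a}"
  proof
    show "(\<Union>m. D m) \<subseteq> U - {a}"
      using N(2,3) antimono[of 0] unfolding D_def by blast
    have exit: "x \<notin> N m \<Longrightarrow> x \<in> U \<Longrightarrow> \<exists>k. x \<in> D k" for x m
    proof (induction m)
      case 0
      then show ?case
        using N(3) by simp
    next
      case (Suc m)
      then show ?case
        unfolding D_def by blast
    qed
    show "U - {a} \<subseteq> (\<Union>m. D m)"
    proof
      fix x assume x: "x \<in> U - {a}"
      then obtain m where "inverse (Suc m) < dist a x"
        using reals_Archimedean[of "dist a x"] by auto
      then have "x \<notin> N (Suc m)"
        using N(5)[of m] by auto
      then show "x \<in> (\<Union>m. D m)"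
        using exit x by blast
    qed
  qed
  moreover have "finite {m. \<not> D m \<subseteq> ball a r}" if "r > 0" for r
  proof -
    obtain M where M: "inverse (Suc M) < r"
      using reals_Archimedean[OF \<open>r > 0\<close>] by blast
    have "D m \<subseteq> ball a r" if m: "M < m" for m
    proof -
      obtain m' where m': "m = Suc m'" "M \<le> m'"
        using m by (cases m) auto
      then have "inverse (real (Suc m')) \<le> inverse (Suc M)"
        by (simp add: divide_simps)
      then have "ball a (inverse (Suc m')) \<subseteq> ball a r"
        using M by (intro subset_ball) linarith
      then show ?thesis
        using N(5)[of m'] m'(1) unfolding D_def by blast
    qed
    then have "{m. \<not> D m \<subseteq> ball a r} \<subseteq> {..M}"
      using not_le by blast
    then show ?thesis
      by (rule finite_subset) simp
  qed
  ultimately show ?thesis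
    using that unfolding clopen_partition_def by blast
qed

lemma clopen_partition_punctured:
  fixes K :: "'a::metric_space set"
  assumes K: "cantor_set K" and U: "clopen_in K U" "a \<in> U" and I: "countable I" "infinite I"
  shows "\<exists>c. clopen_partition K (U - {a}) c I \<and> (\<forall>r>0. finite {i\<in>I. \<not> c i \<subseteq> ball a r})"
proof -
  obtain D :: "nat \<Rightarrow> 'a set" where D: "clopen_partition K (U - {a}) D UNIV"
      "\<And>r. r > 0 \<Longrightarrow> finite {m. \<not> D m \<subseteq> ball a r}"
    using clopen_partition_punctured_nat[OF K U] by blast
  obtain e :: "_ \<Rightarrow> nat" where e: "bij_betw e I UNIV"
    using countableE_infinite[OF I] by blast
  have "finite {i\<in>I. \<not> (D \<circ> e) i \<subseteq> ball a r}" if "r > 0" for r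
    using finite_vimage_IntI[OF D(2)[OF that], of e I] e
    by (simp add: bij_betw_def Int_commute vimage_def Collect_conj_eq)
  then show ?thesis
    using clopen_partition_reindex[OF D(1) e] by blast
qed

lemma disjoint_clopen_refinement:
  assumes "finite F" "\<forall>A\<in>F. clopen_in K A"
  shows "\<exists>\<P>. finite \<P> \<and> \<Union>\<P> = \<Union>F \<and> disjoint \<P> \<and> (\<forall>P\<in>\<P>. clopen_in K P \<and> P \<noteq> {} \<and> (\<exists>A\<in>F. P \<subseteq> A))"
  using assms
proof (induction F rule: finite_induct)
  case empty
  then show ?case
    by (intro exI[of _ "{}"]) auto
next
  case (insert A F)
  then obtain \<P> where \<P>: "finite \<P>" "\<Union>\<P> = \<Union>F" "disjoint \<P>"
      "\<forall>P\<in>\<P>. clopen_in K P \<and> P \<noteq> {} \<and> (\<exists>A\<in>F. P \<subseteq> A)"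
    by auto
  define \<Q> where "\<Q> = insert A ((\<lambda>P. P - A) ` \<P>) - {{}}"
  have "\<Union>\<Q> = A \<union> \<Union>\<P>"
    unfolding \<Q>_def by auto
  then have "\<Union>\<Q> = \<Union>(insert A F)"
    using \<P>(2) by simp
  moreover have "disjoint \<Q>"
    using \<P>(3) unfolding \<Q>_def disjoint_def by blast
  moreover have "clopen_in K P \<and> P \<noteq> {} \<and> (\<exists>B\<in>insert A F. P \<subseteq> B)" if P: "P \<in> \<Q>" for P
  proof (cases "P = A")
    case False
    then obtain P' where P': "P' \<in> \<P>" "P = P' - A" "P \<noteq> {}"
      using P unfolding \<Q>_def by blast
    then obtain B where "B \<in> F" "P' \<subseteq> B" "clopen_in K P'"
      using \<P>(4) by blast
    moreover have "clopen_in K A"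
      using insert.prems by simp
    ultimately show ?thesis
      using P' clopen_in_Diff by auto
  qed (use P insert.prems \<Q>_def in auto)
  moreover have "finite \<Q>"
    using \<P>(1) unfolding \<Q>_def by simp
  ultimately show ?case
    by blast
qed

lemma small_clopen_partition:
  fixes K :: "'a::metric_space set"
  assumes K: "cantor_set K" and \<delta>: "\<delta> > 0"
  obtains \<P> where "finite \<P>" "clopen_partition K K id \<P>" "\<And>P x y. P \<in> \<P> \<Longrightarrow> x \<in> P \<Longrightarrow> y \<in> P \<Longrightarrow> dist x y < \<delta>"
proof -
  have "\<exists>C W. clopen_in K C \<and> x \<in> C \<and> C \<subseteq> ball x (\<delta>/2) \<and> open W \<and> C = K \<inter> W" if x: "x \<in> K" for x
  proof -
    obtain C where C: "clopen_in K C" "x \<in> C" "C \<subseteq> ball x (\<delta>/2)"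
      using clopen_in_nbhd[of K x "ball x (\<delta>/2)"] K x \<delta> unfolding cantor_set_def by auto
    moreover obtain W where "open W" "C = K \<inter> W"
      using clopen_in_open_trace[OF C(1)] by blast
    ultimately show ?thesis
      by blast
  qed
  then obtain C W where CW: "\<And>x. x \<in> K \<Longrightarrow> clopen_in K (C x) \<and> x \<in> C x \<and> C x \<subseteq> ball x (\<delta>/2)
      \<and> open (W x) \<and> C x = K \<inter> W x"
    by metis
  obtain F where F: "F \<subseteq> K" "finite F" "K \<subseteq> (\<Union>x\<in>F. W x)"
  proof (rule compactE_image[of K K W])
    show "compact K"
      using K by (simp add: cantor_set_def)
    show "open (W x)" if "x \<in> K" for x
      using CW that by blast
    show "K \<subseteq> (\<Union>x\<in>K. W x)"
      using CW by blast
  qed (rule that)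
  have "\<Union>(C ` F) = K \<inter> (\<Union>x\<in>F. W x)"
    using CW F(1) by auto
  also have "\<dots> = K"
    using F(3) by blast
  finally have "\<Union>(C ` F) = K" .
  moreover have "finite (C ` F)" "\<forall>A\<in>C ` F. clopen_in K A"
    using F(1,2) CW by auto
  ultimately obtain \<P> where \<P>: "finite \<P>" "\<Union>\<P> = K" "disjoint \<P>"
      "\<forall>P\<in>\<P>. clopen_in K P \<and> P \<noteq> {} \<and> (\<exists>A\<in>C ` F. P \<subseteq> A)"
    using disjoint_clopen_refinement by metis
  have "dist x y < \<delta>" if xy: "P \<in> \<P>" "x \<in> P" "y \<in> P" for P x y
  proof -
    obtain z where "z \<in> F" "P \<subseteq> C z"
      using \<P>(4) xy(1) by blast
    then have "P \<subseteq> ball z (\<delta>/2)"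
      using F(1) CW by blast
    then have "dist x z < \<delta>/2" "dist y z < \<delta>/2"
      using xy by (auto simp: dist_commute)
    then show ?thesis
      by (rule dist_triangle_half_l)
  qed
  moreover have "clopen_partition K K id \<P>"
    using \<P> by (simp add: clopen_partition_def disjoint_image_disjoint_family_on)
  ultimately show ?thesis
    using that \<P>(1) by blast
qed

lemma dist_le_geometric_tail:
  fixes f :: "nat \<Rightarrow> 'a::metric_space"
  assumes step: "\<And>k. dist (f k) (f (Suc k)) \<le> (1/2::real)^k"
  shows "dist (f k) (f (k + m)) \<le> 2 * (1/2::real)^k"
proof -
  have "dist (f k) (f (k + m)) \<le> 2 * (1/2::real)^k - 2 * (1/2)^(k + m)"
  proof (induction m)
    case (Suc m)
    have "dist (f k) (f (k + Suc m)) \<le> dist (f k) (f (k + m)) + dist (f (k + m)) (f (Suc (k + m)))"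
      by (simp add: dist_triangle)
    also have "\<dots> \<le> 2 * (1/2::real)^k - 2 * (1/2)^(k + Suc m)"
      using Suc step[of "k + m"] by simp
    finally show ?case .
  qed simp
  moreover have "0 \<le> (1/2::real)^(k + m)"
    by simp
  ultimately show ?thesis
    by linarith
qed

lemma geometric_Cauchy_limit:
  fixes f :: "nat \<Rightarrow> 'a::metric_space"
  assumes Y: "complete Y" "\<And>k. f k \<in> Y" and step: "\<And>k. dist (f k) (f (Suc k)) \<le> (1/2::real)^k"
  obtains l where "l \<in> Y" "f \<longlonglongrightarrow> l" "\<And>k. dist (f k) l \<le> 2 * (1/2::real)^k"
proof -
  have tail: "dist (f k) (f n) \<le> 2 * (1/2::real)^k" if "k \<le> n" for k n
    using dist_le_geometric_tail[OF step, of k "n - k"] that by simp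
  have "Cauchy f"
  proof (rule metric_CauchyI)
    fix e :: real assume "e > 0"
    then obtain M where M: "(1/2::real)^M < e/4"
      using real_arch_pow_inv[of "e/4" "1/2::real"] by auto
    have "dist (f m) (f n) < e" if "M \<le> m" "M \<le> n" for m n
      using tail[OF that(1)] tail[OF that(2)] dist_triangle3[of "f m" "f n" "f M"] M by linarith
    then show "\<exists>M. \<forall>m\<ge>M. \<forall>n\<ge>M. dist (f m) (f n) < e"
      by blast
  qed
  then obtain l where l: "l \<in> Y" "f \<longlonglongrightarrow> l"
    using Y unfolding complete_def by blast
  have "dist (f k) l \<le> 2 * (1/2::real)^k" for k
  proof (rule LIMSEQ_le_const2)
    show "(\<lambda>n. dist (f k) (f (n + k))) \<longlonglongrightarrow> dist (f k) l"
      using LIMSEQ_ignore_initial_segment[OF l(2), of k] by (intro tendsto_intros)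
  qed (use tail in auto)
  with l that show ?thesis
    by blast
qed

lemma continuous_surjection_from_approximations:
  fixes f :: "nat \<Rightarrow> 'a::metric_space \<Rightarrow> 'b::metric_space"
  assumes X: "compact X" and Y: "compact Y"
    and fY: "\<And>k x. x \<in> X \<Longrightarrow> f k x \<in> Y"
    and fc: "\<And>k. continuous_on X (f k)"
    and step: "\<And>k x. x \<in> X \<Longrightarrow> dist (f k x) (f (Suc k) x) \<le> (1/2::real)^k"
    and dense: "\<And>k y. y \<in> Y \<Longrightarrow> \<exists>x\<in>X. dist (f k x) y \<le> (1/2::real)^k"
  shows "\<exists>g. continuous_on X g \<and> g ` X = Y"
proof -
  have "\<exists>l. l \<in> Y \<and> (\<forall>k. dist (f k x) l \<le> 2 * (1/2::real)^k)" if "x \<in> X" for x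
    using geometric_Cauchy_limit[of Y "\<lambda>k. f k x"] compact_imp_complete[OF Y] fY step that
    by metis
  then obtain g where g: "\<And>x. x \<in> X \<Longrightarrow> g x \<in> Y"
      "\<And>x k. x \<in> X \<Longrightarrow> dist (f k x) (g x) \<le> 2 * (1/2::real)^k"
    by metis
  have small: "\<exists>k. 2 * (1/2::real)^k < e" if e: "e > 0" for e
  proof -
    obtain k where "(1/2::real)^k < e/2"
      using real_arch_pow_inv[of "e/2" "1/2::real"] e by auto
    then show ?thesis
      by (intro exI[of _ k]) simp
  qed
  have "uniform_limit X f g sequentially"
  proof (rule uniform_limitI)
    fix e :: real assume "e > 0"
    then obtain M where M: "2 * (1/2::real)^M < e"
      using small by blast
    have "dist (f n x) (g x) < e" if "M \<le> n" "x \<in> X" for n x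
    proof -
      have "(1/2::real)^n \<le> (1/2)^M"
        using power_decreasing[OF that(1), of "1/2::real"] by simp
      then show ?thesis
        using g(2)[OF that(2), of n] M by linarith
    qed
    then show "\<forall>\<^sub>F n in sequentially. \<forall>x\<in>X. dist (f n x) (g x) < e"
      unfolding eventually_sequentially by blast
  qed
  then have gc: "continuous_on X g"
    by (intro uniform_limit_theorem[of _ f]) (auto simp: fc)
  have "y \<in> closure (g ` X)" if "y \<in> Y" for y
    unfolding closure_approachable
  proof (intro allI impI)
    fix e :: real assume "e > 0"
    then obtain M where M: "2 * (1/2::real)^M < e/2"
      using small[of "e/2"] by auto
    obtain x where x: "x \<in> X" "dist (f M x) y \<le> (1/2::real)^M"
      using dense \<open>y \<in> Y\<close> by blast
    moreover have "0 \<le> (1/2::real)^M"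
      by simp
    ultimately have "dist (g x) y < e"
      using g(2)[OF x(1), of M] dist_triangle3[of "g x" y "f M x"] M by linarith
    then show "\<exists>z\<in>g ` X. dist z y < e"
      using x(1) by blast
  qed
  moreover have "closed (g ` X)"
    using compact_continuous_image[OF gc X] by (rule compact_imp_closed)
  ultimately show ?thesis
    using gc g(1) closure_closed by blast
qed

lemma compact_small_cover:
  fixes Y :: "'a::metric_space set"
  assumes Y: "compact Y" and Q: "Q \<subseteq> Y" "Q \<noteq> {}" and r: "r > 0"
  obtains \<R> where "finite \<R>" "\<R> \<noteq> {}" "\<Union>\<R> = Q"
    "\<And>A. A \<in> \<R> \<Longrightarrow> A \<noteq> {} \<and> (\<forall>y\<in>A. \<forall>z\<in>A. dist y z \<le> r)"
proof -
  obtain F where F: "F \<subseteq> Y" "finite F" "Y \<subseteq> (\<Union>y\<in>F. ball y (r/2))"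
  proof (rule compactE_image[OF Y, of Y "\<lambda>y. ball y (r/2)"])
    show "Y \<subseteq> (\<Union>y\<in>Y. ball y (r/2))"
    proof
      fix y assume "y \<in> Y"
      then show "y \<in> (\<Union>y\<in>Y. ball y (r/2))"
        using r by (intro UN_I[of y]) auto
    qed
  qed (auto intro: that)
  define \<R> where "\<R> = (\<lambda>y. Q \<inter> ball y (r/2)) ` F - {{}}"
  have "\<Union>\<R> = Q \<inter> (\<Union>y\<in>F. ball y (r/2))"
    unfolding \<R>_def by blast
  also have "\<dots> = Q"
    using F(3) Q(1) by blast
  finally have "\<Union>\<R> = Q" .
  moreover have "dist y z \<le> r" if A: "A \<in> \<R>" "y \<in> A" "z \<in> A" for A y z
  proof -
    obtain w where "dist w y < r/2" "dist w z < r/2"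
      using A unfolding \<R>_def by auto
    then show ?thesis
      using dist_triangle[of y z w] by (simp add: dist_commute)
  qed
  moreover have "finite \<R>"
    using F(2) unfolding \<R>_def by simp
  moreover have "A \<noteq> {}" if "A \<in> \<R>" for A
    using that unfolding \<R>_def by blast
  moreover have "\<R> \<noteq> {}"
    using \<open>\<Union>\<R> = Q\<close> Q(2) by auto
  ultimately show ?thesis
    using that by blast
qed

definition labelled_partition ::
    "'a::topological_space set \<Rightarrow> 'a set \<Rightarrow> 'b set \<Rightarrow> ('a set \<times> 'b set) set \<Rightarrow> bool" where
  "labelled_partition K X Y S \<longleftrightarrow> finite S
     \<and> (\<forall>a\<in>S. clopen_in K (fst a) \<and> fst a \<noteq> {} \<and> snd a \<noteq> {} \<and> snd a \<subseteq> Y)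
     \<and> (\<forall>a\<in>S. \<forall>b\<in>S. fst a \<inter> fst b \<noteq> {} \<longrightarrow> a = b) \<and> \<Union>(fst ` S) = X \<and> \<Union>(snd ` S) = Y"

definition labels_diameter_le :: "real \<Rightarrow> ('a set \<times> 'b::metric_space set) set \<Rightarrow> bool" where
  "labels_diameter_le r S \<longleftrightarrow> (\<forall>a\<in>S. \<forall>y\<in>snd a. \<forall>z\<in>snd a. dist y z \<le> r)"

definition refines :: "('a set \<times> 'b set) set \<Rightarrow> ('a set \<times> 'b set) set \<Rightarrow> bool" where
  "refines S' S \<longleftrightarrow> (\<forall>a\<in>S'. \<exists>b\<in>S. fst a \<subseteq> fst b \<and> snd a \<subseteq> snd b)"

lemma labelled_partition_single:
  fixes K :: "'a::metric_space set" and Y :: "'b::metric_space set"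
  assumes K: "cantor_set K" and P: "clopen_in K P" "P \<noteq> {}"
    and Q: "Q \<subseteq> Y" "Q \<noteq> {}" and Y: "compact Y" and r: "r > 0"
  shows "\<exists>N. labelled_partition K P Q N \<and> labels_diameter_le r N"
proof -
  obtain \<R> where \<R>: "finite \<R>" "\<R> \<noteq> {}" "\<Union>\<R> = Q"
      "\<And>A. A \<in> \<R> \<Longrightarrow> A \<noteq> {} \<and> (\<forall>y\<in>A. \<forall>z\<in>A. dist y z \<le> r)"
    using compact_small_cover[OF Y Q r] by blast
  obtain c where c: "clopen_partition K P c \<R>"
    using clopen_partition_finite[OF K P \<R>(1,2)] by blast
  define N where "N = (\<lambda>A. (c A, A)) ` \<R>"
  have "A = B" if "A \<in> \<R>" "B \<in> \<R>" "c A \<inter> c B \<noteq> {}" for A B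
    using c that unfolding clopen_partition_def disjoint_family_on_def by blast
  then have "labelled_partition K P Q N"
    using c \<R> unfolding labelled_partition_def clopen_partition_def N_def
    by (auto simp: image_image)
  moreover have "labels_diameter_le r N"
    using \<R>(4) unfolding labels_diameter_le_def N_def by auto
  ultimately show ?thesis
    by blast
qed

lemma labelled_partition_UN:
  assumes S: "labelled_partition K X Y S"
    and N: "\<And>a. a \<in> S \<Longrightarrow> labelled_partition K (fst a) (snd a) (N a)"
  shows "labelled_partition K X Y (\<Union>(N ` S))"
proof -
  have sub: "fst b \<subseteq> fst a" "snd b \<subseteq> snd a" if "a \<in> S" "b \<in> N a" for a b
    using N[OF that(1)] that(2) unfolding labelled_partition_def by auto
  have "b = b'" if "a \<in> S" "b \<in> N a" "a' \<in> S" "b' \<in> N a'" "fst b \<inter> fst b' \<noteq> {}" for a a' b b'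
  proof -
    have "a = a'"
      using S sub[OF that(1,2)] sub[OF that(3,4)] that unfolding labelled_partition_def by blast
    then show ?thesis
      using N[OF that(1)] that unfolding labelled_partition_def by blast
  qed
  moreover have "\<Union>(fst ` \<Union>(N ` S)) = X"
  proof -
    have "\<Union>(fst ` \<Union>(N ` S)) = (\<Union>a\<in>S. \<Union>(fst ` N a))"
      by blast
    also have "\<dots> = (\<Union>a\<in>S. fst a)"
      using N unfolding labelled_partition_def by simp
    finally show ?thesis
      using S unfolding labelled_partition_def by simp
  qed
  moreover have "\<Union>(snd ` \<Union>(N ` S)) = Y"
  proof -
    have "\<Union>(snd ` \<Union>(N ` S)) = (\<Union>a\<in>S. \<Union>(snd ` N a))"
      by blast
    also have "\<dots> = (\<Union>a\<in>S. snd a)"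
      using N unfolding labelled_partition_def by simp
    finally show ?thesis
      using S unfolding labelled_partition_def by simp
  qed
  moreover have "clopen_in K (fst b) \<and> fst b \<noteq> {} \<and> snd b \<noteq> {} \<and> snd b \<subseteq> Y"
    if "a \<in> S" "b \<in> N a" for a b
    using N[OF that(1)] S sub[OF that] that unfolding labelled_partition_def by blast
  moreover have "finite (\<Union>(N ` S))"
    using S N unfolding labelled_partition_def by blast
  ultimately show ?thesis
    unfolding labelled_partition_def by blast
qed

lemma labelled_partition_refine:
  fixes K :: "'a::metric_space set" and Y :: "'b::metric_space set"
  assumes K: "cantor_set K" and S: "labelled_partition K X Y S" and Y: "compact Y" and r: "r > 0"
  shows "\<exists>S'. labelled_partition K X Y S' \<and> labels_diameter_le r S' \<and> refines S' S"
proof -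
  have "\<exists>N. labelled_partition K (fst a) (snd a) N \<and> labels_diameter_le r N" if "a \<in> S" for a
    using S that labelled_partition_single[OF K _ _ _ _ Y r]
    unfolding labelled_partition_def by blast
  then obtain N where N: "\<And>a. a \<in> S \<Longrightarrow> labelled_partition K (fst a) (snd a) (N a)"
      "\<And>a. a \<in> S \<Longrightarrow> labels_diameter_le r (N a)"
    by metis
  have "labels_diameter_le r (\<Union>(N ` S))"
    using N(2) unfolding labels_diameter_le_def by blast
  moreover have "refines (\<Union>(N ` S)) S"
    using N(1) unfolding refines_def labelled_partition_def by blast
  ultimately show ?thesis
    using labelled_partition_UN[OF S N(1)] by blast
qed

definition label_map :: "('a set \<times> 'b set) set \<Rightarrow> 'a \<Rightarrow> 'b" where
  "label_map S x = (SOME y. y \<in> snd (THE a. a \<in> S \<and> x \<in> fst a))"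

lemma label_map_eq:
  assumes "labelled_partition K X Y S" "a \<in> S" "x \<in> fst a"
  shows "label_map S x = (SOME y. y \<in> snd a)"
proof -
  have "(THE a. a \<in> S \<and> x \<in> fst a) = a"
    using assms unfolding labelled_partition_def by blast
  then show ?thesis
    by (simp add: label_map_def)
qed

lemma label_map_in:
  assumes "labelled_partition K X Y S" "a \<in> S" "x \<in> fst a"
  shows "label_map S x \<in> snd a"
proof -
  have "snd a \<noteq> {}"
    using assms unfolding labelled_partition_def by blast
  then show ?thesis
    using label_map_eq[OF assms] by (simp add: some_in_eq)
qed

lemma continuous_on_label_map:
  assumes S: "labelled_partition K X Y S" and K: "closed K"
  shows "continuous_on X (label_map S)"
proof -
  have "continuous_on (\<Union>a\<in>S. fst a) (label_map S)"
  proof (rule continuous_on_closed_Union)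
    show "finite S"
      using S unfolding labelled_partition_def by blast
  next
    fix a assume a: "a \<in> S"
    then show "closed (fst a)"
      using S K clopen_in_closed unfolding labelled_partition_def by blast
    show "continuous_on (fst a) (label_map S)"
      using label_map_eq[OF S a] by (simp add: continuous_on_cong)
  qed
  then show ?thesis
    using S unfolding labelled_partition_def by simp
qed

text \<open>Alexandroff-Hausdorff: every nonempty compact metric space is a continuous image of a
  Cantor set. The maps are constant on the pieces of finer and finer labelled partitions.\<close>

theorem cantor_set_continuous_surjection:
  fixes X :: "'a::metric_space set" and Y :: "'b::metric_space set"
  assumes X: "cantor_set X" and Y: "compact Y" "Y \<noteq> {}"
  shows "\<exists>g. continuous_on X g \<and> g ` X = Y"
proof -
  have "labelled_partition X X Y {(X, Y)}"
    using X Y(2) unfolding labelled_partition_def clopen_in_def cantor_set_def by auto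
  then have start: "\<exists>S. labelled_partition X X Y S \<and> labels_diameter_le ((1/2)^0) S"
    using labelled_partition_refine[OF X _ Y(1), where r=1] by auto
  have "\<exists>S. \<forall>k. (labelled_partition X X Y (S k) \<and> labels_diameter_le ((1/2)^k) (S k))
      \<and> refines (S (Suc k)) (S k)"
  proof (rule dependent_nat_choice[of "\<lambda>k S. labelled_partition X X Y S \<and> labels_diameter_le ((1/2)^k) S"
        "\<lambda>k S S'. refines S' S"])
    fix S and k :: nat
    assume "labelled_partition X X Y S \<and> labels_diameter_le ((1/2)^k) S"
    then show "\<exists>S'. (labelled_partition X X Y S' \<and> labels_diameter_le ((1/2)^Suc k) S') \<and> refines S' S"
      using labelled_partition_refine[OF X _ Y(1), where S=S and r="(1/2)^Suc k"] by auto
  qed (rule start)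
  then obtain S where S: "\<And>k. labelled_partition X X Y (S k)"
      "\<And>k. labels_diameter_le ((1/2)^k) (S k)" "\<And>k. refines (S (Suc k)) (S k)"
    by blast
  have cover: "\<exists>a\<in>S k. x \<in> fst a" if "x \<in> X" for x k
    using S(1)[of k] that unfolding labelled_partition_def by blast
  show ?thesis
  proof (rule continuous_surjection_from_approximations[of X Y "\<lambda>k. label_map (S k)"])
    show "compact X"
      using X by (simp add: cantor_set_def)
    show "compact Y"
      by (fact Y(1))
    show "label_map (S k) x \<in> Y" if "x \<in> X" for k x
      using cover[OF that, of k] label_map_in[OF S(1)] S(1)[of k]
      unfolding labelled_partition_def by blast
    show "continuous_on X (label_map (S k))" for k
      using continuous_on_label_map[OF S(1)] X by (simp add: cantor_set_def compact_imp_closed)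
    show "dist (label_map (S k) x) (label_map (S (Suc k)) x) \<le> (1/2)^k" if x: "x \<in> X" for k x
    proof -
      obtain a where a: "a \<in> S (Suc k)" "x \<in> fst a"
        using cover[OF x] by blast
      then obtain b where b: "b \<in> S k" "fst a \<subseteq> fst b" "snd a \<subseteq> snd b"
        using S(3)[of k] unfolding refines_def by blast
      have "label_map (S k) x \<in> snd b" "label_map (S (Suc k)) x \<in> snd b"
        using label_map_in[OF S(1) b(1)] label_map_in[OF S(1) a] a(2) b(2,3) by auto
      then show ?thesis
        using S(2)[of k] b(1) unfolding labels_diameter_le_def by blast
    qed
    show "\<exists>x\<in>X. dist (label_map (S k) x) y \<le> (1/2)^k" if y: "y \<in> Y" for k y
    proof -
      obtain a where a: "a \<in> S k" "y \<in> snd a"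
        using S(1)[of k] y unfolding labelled_partition_def by blast
      then obtain x where x: "x \<in> fst a" "x \<in> X"
        using S(1)[of k] unfolding labelled_partition_def by blast
      then show ?thesis
        using label_map_in[OF S(1) a(1) x(1)] a S(2)[of k] unfolding labels_diameter_le_def by blast
    qed
  qed
qed

lemma funpow_fixed_point: "f x = x \<Longrightarrow> (f ^^ n) x = x"
  by (induction n) simp_all

lemma finite_orbit_repeats:
  assumes "finite (range (\<lambda>k. (f ^^ k) x))"
  obtains a b where "a < b" "(f ^^ a) x = (f ^^ b) x"
proof -
  have "\<not> inj (\<lambda>k. (f ^^ k) x)"
    using assms finite_imageD by blast
  then obtain a b where "a \<noteq> b" "(f ^^ a) x = (f ^^ b) x"
    unfolding inj_def by blast
  then show ?thesis
    using that by (metis linorder_neqE_nat)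
qed

lemma finally_periodic_if_finite_orbit:
  assumes "finite (range (\<lambda>k. (f ^^ k) x))"
  shows "finally_periodic f x"
proof -
  obtain a b where ab: "a < b" "(f ^^ a) x = (f ^^ b) x"
    using finite_orbit_repeats[OF assms] by blast
  have "(f ^^ ((b - a) + Suc a)) x = f ((f ^^ b) x)"
    using ab(1) by (simp add: Suc_diff_le less_imp_le)
  also have "\<dots> = (f ^^ Suc a) x"
    using ab(2) by simp
  finally show ?thesis
    unfolding finally_periodic_def using ab(1) by (intro exI[of _ "Suc a"] exI[of _ "b - a"]) simp
qed

lemma finally_periodic_if_enters_invariant:
  assumes F: "finite F" "\<And>y. y \<in> F \<Longrightarrow> f y \<in> F" and m: "(f ^^ m) x \<in> F"
  shows "finally_periodic f x"
proof (rule finally_periodic_if_finite_orbit)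
  have "(f ^^ (i + m)) x \<in> F" for i
    by (induction i) (use m F(2) in auto)
  then have "(f ^^ k) x \<in> (\<lambda>k. (f ^^ k) x) ` {..<m} \<union> F" for k
    by (cases "k < m") (auto, metis le_add_diff_inverse2 not_less)
  then have "range (\<lambda>k. (f ^^ k) x) \<subseteq> (\<lambda>k. (f ^^ k) x) ` {..<m} \<union> F"
    by blast
  then show "finite (range (\<lambda>k. (f ^^ k) x))"
    by (rule finite_subset) (simp add: F(1))
qed

definition periodic_points :: "('a \<Rightarrow> 'a) \<Rightarrow> 'a set" where
  "periodic_points p = {v. \<exists>m>0. (p ^^ m) v = v}"

lemma periodic_points_image:
  assumes "v \<in> periodic_points p"
  shows "p v \<in> periodic_points p"
proof -
  obtain m where "m > 0" "(p ^^ m) v = v"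
    using assms unfolding periodic_points_def by blast
  moreover have "(p ^^ m) (p v) = p ((p ^^ m) v)"
    by (simp add: funpow_swap1)
  ultimately show ?thesis
    unfolding periodic_points_def by auto
qed

lemma periodic_points_common_period:
  assumes "v \<in> periodic_points p" "w \<in> periodic_points p"
  obtains m where "m > 0" "(p ^^ m) v = v" "(p ^^ m) w = w"
proof -
  obtain m n where "m > 0" "(p ^^ m) v = v" "n > 0" "(p ^^ n) w = w"
    using assms unfolding periodic_points_def by blast
  have "(p ^^ (m * n)) v = v"
    unfolding funpow_mult[symmetric] by (rule funpow_fixed_point) fact
  moreover have "(p ^^ (m * n)) w = w"
    unfolding mult.commute[of m n] funpow_mult[symmetric] by (rule funpow_fixed_point) fact
  ultimately show ?thesis
    using that[of "m * n"] \<open>m > 0\<close> \<open>n > 0\<close> by simp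
qed

lemma bij_betw_periodic_points: "bij_betw p (periodic_points p) (periodic_points p)"
proof (rule bij_betw_imageI)
  show "inj_on p (periodic_points p)"
  proof (rule inj_onI)
    fix v w assume vw: "v \<in> periodic_points p" "w \<in> periodic_points p" "p v = p w"
    obtain m where m: "m > 0" "(p ^^ m) v = v" "(p ^^ m) w = w"
      using periodic_points_common_period[OF vw(1,2)] by blast
    then obtain m' where "m = Suc m'"
      using gr0_implies_Suc by blast
    then have "v = (p ^^ m') (p v)"
      using m(2) by (simp add: funpow_swap1)
    also have "\<dots> = (p ^^ m') (p w)"
      using vw(3) by simp
    also have "\<dots> = w"
      using m(3) \<open>m = Suc m'\<close> by (simp add: funpow_swap1)
    finally show "v = w" .
  qed
  have "v \<in> p ` periodic_points p" if v: "v \<in> periodic_points p" for v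
  proof -
    obtain m where m: "m > 0" "(p ^^ m) v = v"
      using v unfolding periodic_points_def by blast
    then obtain m' where "m = Suc m'"
      using gr0_implies_Suc by blast
    then have "p ((p ^^ m') v) = v"
      using m(2) by simp
    moreover have "(p ^^ k) v \<in> periodic_points p" for k
      by (induction k) (simp_all add: v periodic_points_image)
    ultimately show ?thesis
      by (rule image_eqI[OF sym])
  qed
  then have "periodic_points p \<subseteq> p ` periodic_points p"
    by (rule subsetI)
  moreover have "p ` periodic_points p \<subseteq> periodic_points p"
    by (rule image_subsetI) (rule periodic_points_image)
  ultimately show "p ` periodic_points p = periodic_points p"
    by (rule antisym[rotated])
qed

lemma eventually_periodic_iterates:
  assumes V: "finite V" "\<And>v. v \<in> V \<Longrightarrow> p v \<in> V"
  obtains N where "\<And>j k. j \<in> V \<Longrightarrow> N \<le> k \<Longrightarrow> (p ^^ k) j \<in> periodic_points p"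
proof -
  have "eventually (\<lambda>k. (p ^^ k) j \<in> periodic_points p) sequentially" if j: "j \<in> V" for j
  proof -
    have "(p ^^ k) j \<in> V" for k
      by (induction k) (simp_all add: j V(2))
    then have "range (\<lambda>k. (p ^^ k) j) \<subseteq> V"
      by blast
    then have "finite (range (\<lambda>k. (p ^^ k) j))"
      by (rule finite_subset) (rule V(1))
    then obtain a b where ab: "a < b" "(p ^^ a) j = (p ^^ b) j"
      by (rule finite_orbit_repeats)
    have "(p ^^ (b - a)) ((p ^^ (i + a)) j) = (p ^^ (i + a)) j" for i
    proof -
      have "(p ^^ (b - a)) ((p ^^ (i + a)) j) = (p ^^ ((b - a) + (i + a))) j"
        by (simp add: funpow_add)
      also have "(b - a) + (i + a) = i + b"
        using ab(1) by simp
      also have "(p ^^ (i + b)) j = (p ^^ i) ((p ^^ b) j)"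
        by (simp add: funpow_add)
      also have "\<dots> = (p ^^ (i + a)) j"
        using ab(2) by (simp add: funpow_add)
      finally show ?thesis .
    qed
    then have "(p ^^ (i + a)) j \<in> periodic_points p" for i
      using ab(1) unfolding periodic_points_def by (intro CollectI exI[of _ "b - a"]) simp
    then have "(p ^^ k) j \<in> periodic_points p" if "a \<le> k" for k
      using le_add_diff_inverse2[OF that] by metis
    then show ?thesis
      unfolding eventually_sequentially by blast
  qed
  then have "eventually (\<lambda>k. \<forall>j\<in>V. (p ^^ k) j \<in> periodic_points p) sequentially"
    using V(1) by (intro eventually_ball_finite) auto
  then show ?thesis
    using that unfolding eventually_sequentially by blast
qed

lemma continuous_within_clopen_in:
  assumes "clopen_in K C" "x \<in> C" "continuous_on C f"
  shows "continuous (at x within K) f"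
proof -
  obtain W where W: "open W" "C = K \<inter> W"
    using assms(1) by (rule clopen_in_open_trace)
  have "at x within K = at x within C"
    using W assms(2) by (intro at_within_nhd[of x W]) auto
  then show ?thesis
    using assms(2,3) by (simp add: continuous_on_eq_continuous_within)
qed

text \<open>A tower of clopen cells: each column \<open>j\<close> is a sequence of cells \<open>cell j k\<close>, and
  the remaining finitely many anchor points are the only accumulation points of the cells.\<close>

locale cell_tower =
  fixes K :: "'a::metric_space set" and J :: "'j set" and cell :: "'j \<Rightarrow> nat \<Rightarrow> 'a set"
    and A :: "'a set" and \<sigma> :: "'a \<Rightarrow> 'a"
  assumes cantor: "cantor_set K"
    and finite_J: "finite J" and finite_A: "finite A"
    and cell_clopen: "\<And>j k. j \<in> J \<Longrightarrow> clopen_in K (cell j k) \<and> cell j k \<noteq> {}"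
    and cell_disjoint: "\<And>j k j' k'. j \<in> J \<Longrightarrow> j' \<in> J \<Longrightarrow> cell j k \<inter> cell j' k' \<noteq> {} \<Longrightarrow> j = j' \<and> k = k'"
    and anchors_disjoint: "\<And>j k. j \<in> J \<Longrightarrow> A \<inter> cell j k = {}"
    and K_eq: "K = A \<union> (\<Union>j\<in>J. \<Union>k. cell j k)"
    and shift_onto: "\<sigma> ` A = A"
    and shift_continuity: "\<And>a \<epsilon>. a \<in> A \<Longrightarrow> \<epsilon> > 0 \<Longrightarrow>
      \<exists>\<delta>>0. \<forall>j\<in>J. \<forall>k. cell j (Suc k) \<inter> ball a \<delta> \<noteq> {} \<longrightarrow> cell j k \<subseteq> ball (\<sigma> a) \<epsilon>"
begin

lemma cell_subset: "j \<in> J \<Longrightarrow> cell j k \<subseteq> K"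
  using cell_clopen clopen_in_subset by blast

lemma cell_closed: "j \<in> J \<Longrightarrow> closed (cell j k)"
  using cell_clopen cantor clopen_in_closed compact_imp_closed unfolding cantor_set_def by blast

lemma cell_compact: "j \<in> J \<Longrightarrow> compact (cell j k)"
  using cantor cell_closed cell_subset unfolding cantor_set_def by (metis compact_Int_closed inf.absorb_iff2)

definition cell_index :: "'a \<Rightarrow> 'j \<times> nat" where
  "cell_index x = (SOME (j, k). j \<in> J \<and> x \<in> cell j k)"

lemma cell_index_eq:
  assumes "j \<in> J" "x \<in> cell j k"
  shows "cell_index x = (j, k)"
  unfolding cell_index_def
proof (rule some_equality)
  fix jk assume "case jk of (j', k') \<Rightarrow> j' \<in> J \<and> x \<in> cell j' k'"
  then show "jk = (j, k)"
    using assms cell_disjoint by (cases jk) blast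
qed (use assms in simp)

definition tower_map :: "('j \<Rightarrow> nat \<Rightarrow> 'a \<Rightarrow> 'a) \<Rightarrow> ('j \<Rightarrow> 'a) \<Rightarrow> 'a \<Rightarrow> 'a" where
  "tower_map g b x =
     (if x \<in> A then \<sigma> x else case cell_index x of (j, 0) \<Rightarrow> b j | (j, Suc k) \<Rightarrow> g j k x)"

lemma tower_map_anchor: "x \<in> A \<Longrightarrow> tower_map g b x = \<sigma> x"
  by (simp add: tower_map_def)

lemma tower_map_base: "j \<in> J \<Longrightarrow> x \<in> cell j 0 \<Longrightarrow> tower_map g b x = b j"
  using anchors_disjoint by (auto simp: tower_map_def cell_index_eq)

lemma tower_map_Suc: "j \<in> J \<Longrightarrow> x \<in> cell j (Suc k) \<Longrightarrow> tower_map g b x = g j k x"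
  using anchors_disjoint by (auto simp: tower_map_def cell_index_eq)

lemma continuous_tower_map_cell:
  assumes g: "\<And>k. continuous_on (cell j (Suc k)) (g j k)" and j: "j \<in> J" and x: "x \<in> cell j k"
  shows "continuous (at x within K) (tower_map g b)"
proof (rule continuous_within_clopen_in[of K "cell j k"])
  show "clopen_in K (cell j k)"
    using cell_clopen[OF j] by blast
  show "continuous_on (cell j k) (tower_map g b)"
  proof (cases k)
    case 0
    then show ?thesis
      using continuous_on_cong[of _ _ _ "\<lambda>_. b j"] tower_map_base[OF j] by simp
  next
    case (Suc k')
    then show ?thesis
      using continuous_on_cong tower_map_Suc[OF j] g by (metis (no_types, lifting))
  qed
qed (rule x)

lemma continuous_tower_map_anchor:
  assumes g: "\<And>j k x. j \<in> J \<Longrightarrow> x \<in> cell j (Suc k) \<Longrightarrow> g j k x \<in> cell j k" and a: "a \<in> A"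
  shows "continuous (at a within K) (tower_map g b)"
  unfolding continuous_within_eps_delta
proof (intro allI impI)
  fix \<epsilon> :: real assume "\<epsilon> > 0"
  obtain \<delta>1 where \<delta>1: "\<delta>1 > 0"
      "\<And>j k. j \<in> J \<Longrightarrow> cell j (Suc k) \<inter> ball a \<delta>1 \<noteq> {} \<Longrightarrow> cell j k \<subseteq> ball (\<sigma> a) \<epsilon>"
    using shift_continuity[OF a \<open>\<epsilon> > 0\<close>] by blast
  define Z where "Z = (\<Union>j\<in>J. cell j 0) \<union> (A - {a})"
  have "closed Z"
    unfolding Z_def using finite_J finite_A cell_closed
    by (intro closed_Un closed_UN finite_imp_closed) auto
  moreover have "a \<notin> Z"
    unfolding Z_def using a anchors_disjoint by blast
  ultimately have "open (- Z)" "a \<in> - Z"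
    by auto
  then obtain \<delta>2 where \<delta>2: "\<delta>2 > 0" "ball a \<delta>2 \<subseteq> - Z"
    by (rule openE)
  have "dist (tower_map g b x) (tower_map g b a) < \<epsilon>" if x: "x \<in> K" "dist x a < min \<delta>1 \<delta>2" for x
  proof -
    have "x \<in> ball a \<delta>1" "x \<in> ball a \<delta>2"
      using x(2) by (auto simp: dist_commute)
    then have "x \<notin> Z"
      using \<delta>2(2) by blast
    show ?thesis
    proof (cases "x \<in> A")
      case True
      then show ?thesis
        using \<open>x \<notin> Z\<close> \<open>\<epsilon> > 0\<close> unfolding Z_def by auto
    next
      case False
      moreover have "x \<in> A \<union> (\<Union>j\<in>J. \<Union>k. cell j k)"
        using x(1) K_eq by simp
      ultimately obtain j k where jk: "j \<in> J" "x \<in> cell j k"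
        by blast
      have "k \<noteq> 0"
      proof
        assume "k = 0"
        then have "x \<in> Z"
          using jk unfolding Z_def by blast
        then show False
          using \<open>x \<notin> Z\<close> by contradiction
      qed
      then obtain k' where "k = Suc k'"
        using not0_implies_Suc by blast
      then have x_cell: "x \<in> cell j (Suc k')"
        using jk(2) by simp
      then have "cell j (Suc k') \<inter> ball a \<delta>1 \<noteq> {}"
        using \<open>x \<in> ball a \<delta>1\<close> by blast
      then have "cell j k' \<subseteq> ball (\<sigma> a) \<epsilon>"
        by (rule \<delta>1(2)[OF jk(1)])
      moreover have "tower_map g b x = g j k' x" "g j k' x \<in> cell j k'"
        using tower_map_Suc[OF jk(1) x_cell] g[OF jk(1) x_cell] by simp_all
      ultimately have "tower_map g b x \<in> ball (\<sigma> a) \<epsilon>"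
        by auto
      then show ?thesis
        using tower_map_anchor[OF a] by (simp add: dist_commute)
    qed
  qed
  then show "\<exists>\<delta>>0. \<forall>x\<in>K. dist x a < \<delta> \<longrightarrow> dist (tower_map g b x) (tower_map g b a) < \<epsilon>"
    using \<delta>1(1) \<delta>2(1) by (intro exI[of _ "min \<delta>1 \<delta>2"]) auto
qed

end

context cell_tower
begin

lemma anchors_subset: "A \<subseteq> K"
  by (subst K_eq) blast

lemma tower_point_cases:
  assumes "x \<in> K"
  obtains "x \<in> A" | j where "j \<in> J" "x \<in> cell j 0" | j k where "j \<in> J" "x \<in> cell j (Suc k)"
proof -
  have "x \<in> A \<union> (\<Union>j\<in>J. \<Union>k. cell j k)"
    using assms K_eq by simp
  then consider "x \<in> A" | j k where "j \<in> J" "x \<in> cell j k"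
    by blast
  then show ?thesis
  proof cases
    case (2 j k)
    then show ?thesis
      using that(2,3) by (cases k) auto
  qed (use that(1) in blast)
qed

lemma continuous_on_tower_map:
  assumes g: "\<And>j k. j \<in> J \<Longrightarrow> continuous_on (cell j (Suc k)) (g j k)"
    "\<And>j k x. j \<in> J \<Longrightarrow> x \<in> cell j (Suc k) \<Longrightarrow> g j k x \<in> cell j k"
  shows "continuous_on K (tower_map g b)"
  unfolding continuous_on_eq_continuous_within
proof
  fix x assume "x \<in> K"
  then consider "x \<in> A" | j k where "j \<in> J" "x \<in> cell j k"
    using K_eq by blast
  then show "continuous (at x within K) (tower_map g b)"
  proof cases
    case 1
    then show ?thesis
      using continuous_tower_map_anchor g(2) by blast
  next
    case (2 j k)
    then show ?thesis
      using continuous_tower_map_cell g(1) by blast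
  qed
qed

lemma tower_map_onto:
  assumes g: "\<And>j k. j \<in> J \<Longrightarrow> g j k ` cell j (Suc k) = cell j k" and b: "\<And>j. j \<in> J \<Longrightarrow> b j \<in> K"
  shows "tower_map g b ` K = K"
proof
  show "tower_map g b ` K \<subseteq> K"
  proof
    fix y assume "y \<in> tower_map g b ` K"
    then obtain x where x: "x \<in> K" "y = tower_map g b x"
      by blast
    from x(1) show "y \<in> K"
    proof (cases rule: tower_point_cases)
      case 1
      then show ?thesis
        using x(2) shift_onto anchors_subset tower_map_anchor by blast
    next
      case (2 j)
      then show ?thesis
        using x(2) b tower_map_base by simp
    next
      case (3 j k)
      then show ?thesis
        using x(2) g cell_subset tower_map_Suc by blast
    qed
  qed
  show "K \<subseteq> tower_map g b ` K"
  proof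
    fix y assume "y \<in> K"
    then consider "y \<in> A" | j k where "j \<in> J" "y \<in> cell j k"
      using K_eq by blast
    then show "y \<in> tower_map g b ` K"
    proof cases
      case 1
      then obtain a where "a \<in> A" "y = \<sigma> a"
        using shift_onto by blast
      then show ?thesis
        using anchors_subset tower_map_anchor by (metis image_eqI subsetD)
    next
      case (2 j k)
      then obtain x where "x \<in> cell j (Suc k)" "y = g j k x"
        using g by blast
      then show ?thesis
        using 2(1) cell_subset tower_map_Suc by (metis image_eqI subsetD)
    qed
  qed
qed

lemma finally_periodic_tower_map:
  assumes g: "\<And>j k x. j \<in> J \<Longrightarrow> x \<in> cell j (Suc k) \<Longrightarrow> g j k x \<in> cell j k"
    and b: "\<And>j. j \<in> J \<Longrightarrow> s j \<in> J \<and> b j \<in> cell (s j) 0" and x: "x \<in> K"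
  shows "finally_periodic (tower_map g b) x"
proof -
  let ?T = "tower_map g b"
  have F: "?T y \<in> A \<union> b ` J" if y: "y \<in> A \<union> b ` J" for y
  proof (cases "y \<in> A")
    case True
    then show ?thesis
      using shift_onto tower_map_anchor by blast
  next
    case False
    then obtain j where "j \<in> J" "y = b j"
      using y by blast
    then have "?T y = b (s j)"
      using b tower_map_base by blast
    then show ?thesis
      using b \<open>j \<in> J\<close> by blast
  qed
  have down: "(?T ^^ Suc k) y = b j" if "j \<in> J" "y \<in> cell j k" for j k y
    using that(2)
  proof (induction k arbitrary: y)
    case 0
    then show ?case
      using tower_map_base[OF that(1)] by simp
  next
    case (Suc k)
    then have "(?T ^^ Suc k) (?T y) = b j"
      using g[OF that(1)] tower_map_Suc[OF that(1)] by simp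
    then show ?case
      by (simp add: funpow_swap1)
  qed
  have "\<exists>m. (?T ^^ m) x \<in> A \<union> b ` J"
  proof (cases "x \<in> A")
    case True
    then show ?thesis
      by (intro exI[of _ 0]) simp
  next
    case False
    then obtain j k where "j \<in> J" "x \<in> cell j k"
      using x K_eq by blast
    then show ?thesis
      using down by blast
  qed
  then show ?thesis
    using finally_periodic_if_enters_invariant[of "A \<union> b ` J" ?T] F finite_A finite_J by blast
qed

lemma tower_map_exists:
  assumes s: "\<And>j. j \<in> J \<Longrightarrow> s j \<in> J"
  obtains T where "endomorphism K T" "\<And>x. x \<in> K \<Longrightarrow> finally_periodic T x"
    "\<And>j k x. j \<in> J \<Longrightarrow> x \<in> cell j (Suc k) \<Longrightarrow> T x \<in> cell j k"
    "\<And>j x. j \<in> J \<Longrightarrow> x \<in> cell j 0 \<Longrightarrow> T x \<in> cell (s j) 0"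
    "\<And>a. a \<in> A \<Longrightarrow> T a = \<sigma> a"
proof -
  have "\<exists>h. continuous_on (cell j (Suc k)) h \<and> h ` cell j (Suc k) = cell j k" if "j \<in> J" for j k
    using cantor_set_continuous_surjection[of "cell j (Suc k)" "cell j k"]
      cantor_set_clopen_in[OF cantor] cell_clopen[OF that] cell_compact[OF that] by blast
  then obtain g where g: "\<And>j k. j \<in> J \<Longrightarrow> continuous_on (cell j (Suc k)) (g j k)"
      "\<And>j k. j \<in> J \<Longrightarrow> g j k ` cell j (Suc k) = cell j k"
    by metis
  define b where "b j = (SOME x. x \<in> cell (s j) 0)" for j
  have b: "s j \<in> J \<and> b j \<in> cell (s j) 0" if "j \<in> J" for j
    using s[OF that] cell_clopen[OF s[OF that]] unfolding b_def by (simp add: some_in_eq)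
  have g_into: "g j k x \<in> cell j k" if "j \<in> J" "x \<in> cell j (Suc k)" for j k x
    using g(2)[OF that(1)] that(2) by blast
  have bK: "b j \<in> K" if "j \<in> J" for j
    using b[OF that] cell_subset by blast
  let ?T = "tower_map g b"
  show ?thesis
  proof (rule that)
    show "endomorphism K ?T"
      unfolding endomorphism_def
    proof
      show "continuous_on K ?T"
        by (rule continuous_on_tower_map) (use g g_into in auto)
      show "?T ` K = K"
        by (rule tower_map_onto) (use g bK in auto)
    qed
    show "finally_periodic ?T x" if "x \<in> K" for x
      using finally_periodic_tower_map[OF g_into b that] .
    show "?T x \<in> cell j k" if "j \<in> J" "x \<in> cell j (Suc k)" for j k x
      using tower_map_Suc[OF that] g_into[OF that] by simp
    show "?T x \<in> cell (s j) 0" if "j \<in> J" "x \<in> cell j 0" for j x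
      using tower_map_base[OF that] b[OF that(1)] by simp
    show "?T a = \<sigma> a" if "a \<in> A" for a
      using tower_map_anchor[OF that] .
  qed
qed

end

lemma bij_betw_periodic_points_Int:
  assumes V: "\<And>v. v \<in> V \<Longrightarrow> p v \<in> V"
  shows "bij_betw p (V \<inter> periodic_points p) (V \<inter> periodic_points p)"
proof (rule bij_betw_imageI)
  show "inj_on p (V \<inter> periodic_points p)"
    using bij_betw_periodic_points[of p] by (auto simp: bij_betw_def inj_on_def)
  have "v \<in> p ` (V \<inter> periodic_points p)" if v: "v \<in> V \<inter> periodic_points p" for v
  proof -
    obtain m where m: "m > 0" "(p ^^ m) v = v"
      using v unfolding periodic_points_def by blast
    then obtain m' where "m = Suc m'"
      using gr0_implies_Suc by blast
    then have "p ((p ^^ m') v) = v"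
      using m(2) by simp
    moreover have "(p ^^ k) v \<in> V \<inter> periodic_points p" for k
    proof (induction k)
      case (Suc k)
      then show ?case
        using V periodic_points_image[of "(p ^^ k) v" p] by simp
    qed (use v in simp)
    ultimately show ?thesis
      by (rule image_eqI[OF sym])
  qed
  then have "V \<inter> periodic_points p \<subseteq> p ` (V \<inter> periodic_points p)"
    by (rule subsetI)
  moreover have "p ` (V \<inter> periodic_points p) \<subseteq> V \<inter> periodic_points p"
    using V by (intro image_subsetI) (blast intro: periodic_points_image)
  ultimately show "p ` (V \<inter> periodic_points p) = V \<inter> periodic_points p"
    by (rule antisym[rotated])
qed

definition funpow_fibre :: "('v \<Rightarrow> 'v) \<Rightarrow> 'v set \<Rightarrow> 'v \<Rightarrow> ('v \<times> nat) set" where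
  "funpow_fibre p V w = {(v, k). v \<in> V \<and> (p ^^ k) v = w}"

lemma infinite_funpow_fibre:
  assumes "w \<in> V \<inter> periodic_points p"
  shows "infinite (funpow_fibre p V w)"
proof
  assume fin: "finite (funpow_fibre p V w)"
  obtain m where m: "m > 0" "(p ^^ m) w = w"
    using assms unfolding periodic_points_def by blast
  have "(p ^^ (m * t)) w = w" for t
    unfolding funpow_mult[symmetric] by (rule funpow_fixed_point) fact
  then have "range (\<lambda>t. (w, m * t)) \<subseteq> funpow_fibre p V w"
    using assms unfolding funpow_fibre_def by auto
  then have "finite (range (\<lambda>t. (w, m * t)))"
    using fin by (rule finite_subset)
  moreover have "inj (\<lambda>t::nat. (w, m * t))"
    using m(1) by (auto simp: inj_def)
  ultimately show False
    using range_inj_infinite by blast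
qed

lemma finite_funpow_fibre:
  assumes V: "finite V" "\<And>v. v \<in> V \<Longrightarrow> p v \<in> V" and w: "w \<notin> periodic_points p"
  shows "finite (funpow_fibre p V w)"
proof -
  obtain N where N: "\<And>v k. v \<in> V \<Longrightarrow> N \<le> k \<Longrightarrow> (p ^^ k) v \<in> periodic_points p"
    using eventually_periodic_iterates[of V p, OF V(1) V(2)] by metis
  have "funpow_fibre p V w \<subseteq> V \<times> {..<N}"
  proof
    fix i assume "i \<in> funpow_fibre p V w"
    then obtain v k where vk: "i = (v, k)" "v \<in> V" "(p ^^ k) v = w"
      unfolding funpow_fibre_def by blast
    then have "\<not> N \<le> k"
      using N w by blast
    then show "i \<in> V \<times> {..<N}"
      using vk by simp
  qed
  then show ?thesis
    using V(1) by (rule finite_subset[OF _ finite_cartesian_product]) simp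
qed

text \<open>Cells from a predecessor map \<open>p\<close> on a finite clopen partition \<open>\<P>\<close>: the member \<open>Q\<close> is
  cut into pieces indexed by the pairs \<open>(P, k)\<close> with \<open>p\<^sup>k P = Q\<close>; if \<open>Q\<close> lies on a cycle of
  \<open>p\<close> there are infinitely many of them and they accumulate at the anchor of \<open>Q\<close>.\<close>

locale predecessor_tower =
  fixes K :: "'a::metric_space set" and \<P> :: "'a set set" and p :: "'a set \<Rightarrow> 'a set"
    and anchor :: "'a set \<Rightarrow> 'a" and piece :: "'a set \<Rightarrow> 'a set \<times> nat \<Rightarrow> 'a set"
  assumes cantor: "cantor_set K" and finite_partition: "finite \<P>"
    and partition: "clopen_partition K K id \<P>"
    and p_into: "\<And>P. P \<in> \<P> \<Longrightarrow> p P \<in> \<P>"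
    and pieces_cyclic: "\<And>Q. Q \<in> \<P> \<inter> periodic_points p \<Longrightarrow> anchor Q \<in> Q
      \<and> clopen_partition K (Q - {anchor Q}) (piece Q) (funpow_fibre p \<P> Q)
      \<and> (\<forall>r>0. finite {i \<in> funpow_fibre p \<P> Q. \<not> piece Q i \<subseteq> ball (anchor Q) r})"
    and pieces_transient: "\<And>Q. Q \<in> \<P> - periodic_points p \<Longrightarrow>
      clopen_partition K Q (piece Q) (funpow_fibre p \<P> Q)"
begin

definition cyclic :: "'a set set" where
  "cyclic = \<P> \<inter> periodic_points p"

definition cell :: "'a set \<Rightarrow> nat \<Rightarrow> 'a set" where
  "cell P k = piece ((p ^^ k) P) (P, k)"

definition anchors :: "'a set" where
  "anchors = anchor ` cyclic"

definition shift :: "'a \<Rightarrow> 'a" where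
  "shift x = anchor (inv_into cyclic p (inv_into cyclic anchor x))"

lemma member_clopen: "P \<in> \<P> \<Longrightarrow> clopen_in K P \<and> P \<noteq> {}"
  using partition unfolding clopen_partition_def by simp

lemma member_disjoint: "P \<in> \<P> \<Longrightarrow> Q \<in> \<P> \<Longrightarrow> x \<in> P \<Longrightarrow> x \<in> Q \<Longrightarrow> P = Q"
  using partition unfolding clopen_partition_def disjoint_family_on_def by auto

lemma members_cover: "\<Union>\<P> = K"
  using partition unfolding clopen_partition_def by simp

lemma iterate_member: "P \<in> \<P> \<Longrightarrow> (p ^^ k) P \<in> \<P>"
  by (induction k) (simp_all add: p_into)

lemma fibre_member: "P \<in> \<P> \<Longrightarrow> (P, k) \<in> funpow_fibre p \<P> ((p ^^ k) P)"
  by (simp add: funpow_fibre_def)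

lemma pieces:
  assumes "Q \<in> \<P>"
  shows "clopen_partition K (if Q \<in> cyclic then Q - {anchor Q} else Q) (piece Q) (funpow_fibre p \<P> Q)"
  using assms pieces_cyclic pieces_transient unfolding cyclic_def by auto

lemma cell_props:
  assumes "P \<in> \<P>"
  shows "clopen_in K (cell P k) \<and> cell P k \<noteq> {} \<and> cell P k \<subseteq> (p ^^ k) P
    \<and> ((p ^^ k) P \<in> cyclic \<longrightarrow> anchor ((p ^^ k) P) \<notin> cell P k)"
  using pieces[OF iterate_member[OF assms, of k]] fibre_member[OF assms, of k]
  unfolding clopen_partition_def cell_def by (auto split: if_splits)

lemma cell_disjoint:
  assumes P: "P \<in> \<P>" "P' \<in> \<P>" and x: "x \<in> cell P k" "x \<in> cell P' k'"
  shows "P = P' \<and> k = k'"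
proof -
  define Q where "Q = (p ^^ k) P"
  have "x \<in> Q" "x \<in> (p ^^ k') P'"
    using x cell_props[OF P(1)] cell_props[OF P(2)] unfolding Q_def by blast+
  then have Q: "(p ^^ k') P' = Q"
    using member_disjoint iterate_member P unfolding Q_def by blast
  have "(P, k) = (P', k')"
  proof (rule ccontr)
    assume "(P, k) \<noteq> (P', k')"
    moreover have "(P, k) \<in> funpow_fibre p \<P> Q" "(P', k') \<in> funpow_fibre p \<P> Q"
      using fibre_member[OF P(1), of k] fibre_member[OF P(2), of k'] Q unfolding Q_def by simp_all
    moreover have "disjoint_family_on (piece Q) (funpow_fibre p \<P> Q)"
      using pieces[OF iterate_member[OF P(1)]] unfolding clopen_partition_def Q_def by blast
    ultimately have "piece Q (P, k) \<inter> piece Q (P', k') = {}"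
      unfolding disjoint_family_on_def by blast
    moreover have "x \<in> piece Q (P, k)" "x \<in> piece Q (P', k')"
      using x Q unfolding cell_def Q_def by simp_all
    ultimately show False
      by blast
  qed
  then show ?thesis
    by simp
qed

lemma cell_subset: "P \<in> \<P> \<Longrightarrow> cell P k \<subseteq> K"
  using cell_props clopen_in_subset by blast

lemma cyclic_subset: "cyclic \<subseteq> \<P>"
  by (simp add: cyclic_def)

lemma bij_betw_cyclic: "bij_betw p cyclic cyclic"
  unfolding cyclic_def by (rule bij_betw_periodic_points_Int) (rule p_into)

lemma anchor_in: "Q \<in> cyclic \<Longrightarrow> anchor Q \<in> Q"
  using pieces_cyclic unfolding cyclic_def by blast

lemma inj_on_anchor: "inj_on anchor cyclic"
proof (rule inj_onI)
  fix Q Q' assume Q: "Q \<in> cyclic" "Q' \<in> cyclic" "anchor Q = anchor Q'"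
  then have "Q \<in> \<P>" "Q' \<in> \<P>" "anchor Q \<in> Q" "anchor Q \<in> Q'"
    using anchor_in[of Q] anchor_in[of Q'] cyclic_subset by auto
  then show "Q = Q'"
    by (rule member_disjoint)
qed

lemma predecessor_in_cyclic:
  assumes "Q \<in> cyclic"
  shows "inv_into cyclic p Q \<in> cyclic" "p (inv_into cyclic p Q) = Q"
  using assms bij_betw_cyclic by (simp_all add: bij_betw_def inv_into_into f_inv_into_f)

lemma shift_anchor: "Q \<in> cyclic \<Longrightarrow> shift (anchor Q) = anchor (inv_into cyclic p Q)"
  unfolding shift_def using inj_on_anchor by simp

lemma anchors_disjoint:
  assumes P: "P \<in> \<P>"
  shows "anchors \<inter> cell P k = {}"
proof -
  have "anchor Q \<notin> cell P k" if Q: "Q \<in> cyclic" for Q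
  proof
    assume a: "anchor Q \<in> cell P k"
    then have "anchor Q \<in> (p ^^ k) P"
      using cell_props[OF P] by blast
    then have "(p ^^ k) P = Q"
      using member_disjoint iterate_member[OF P] anchor_in[OF Q] cyclic_subset Q by blast
    then show False
      using cell_props[OF P, of k] Q a by simp
  qed
  then show ?thesis
    unfolding anchors_def by blast
qed

lemma K_eq: "K = anchors \<union> (\<Union>P\<in>\<P>. \<Union>k. cell P k)"
proof
  show "anchors \<union> (\<Union>P\<in>\<P>. \<Union>k. cell P k) \<subseteq> K"
    using anchor_in cyclic_subset member_clopen clopen_in_subset cell_subset
    unfolding anchors_def by blast
  show "K \<subseteq> anchors \<union> (\<Union>P\<in>\<P>. \<Union>k. cell P k)"
  proof
    fix x assume "x \<in> K"
    then obtain Q where Q: "Q \<in> \<P>" "x \<in> Q"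
      using members_cover by blast
    show "x \<in> anchors \<union> (\<Union>P\<in>\<P>. \<Union>k. cell P k)"
    proof (cases "Q \<in> cyclic \<and> x = anchor Q")
      case True
      then show ?thesis
        unfolding anchors_def by blast
    next
      case False
      then have "x \<in> (if Q \<in> cyclic then Q - {anchor Q} else Q)"
        using Q(2) by auto
      then obtain P k where "P \<in> \<P>" "(p ^^ k) P = Q" "x \<in> piece Q (P, k)"
        using pieces[OF Q(1)] unfolding clopen_partition_def funpow_fibre_def by blast
      then show ?thesis
        unfolding cell_def by blast
    qed
  qed
qed

lemma shift_onto: "shift ` anchors = anchors"
proof -
  have "inv_into cyclic p ` cyclic = cyclic"
    using bij_betw_inv_into[OF bij_betw_cyclic] by (simp add: bij_betw_def)
  then have "shift ` anchors = anchor ` inv_into cyclic p ` cyclic"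
    unfolding anchors_def image_image using shift_anchor by simp
  also have "\<dots> = anchors"
    using \<open>inv_into cyclic p ` cyclic = cyclic\<close> by (simp add: anchors_def)
  finally show ?thesis .
qed

lemma shift_edge:
  assumes "a \<in> anchors"
  shows "\<exists>Q\<in>\<P>. a \<in> p Q \<and> shift a \<in> Q"
proof -
  obtain V where V: "V \<in> cyclic" "a = anchor V"
    using assms unfolding anchors_def by blast
  define W where "W = inv_into cyclic p V"
  have "W \<in> \<P>" "p W = V" "shift a = anchor W" "anchor W \<in> W"
    using predecessor_in_cyclic[OF V(1)] shift_anchor[OF V(1)] anchor_in cyclic_subset V(2)
    unfolding W_def by auto
  then show ?thesis
    using anchor_in[OF V(1)] V(2) by metis
qed

text \<open>Only finitely many cells two levels into a cyclic member fail to follow the shift of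
  its anchor: beyond the preperiod they are pieces of the predecessor member, which shrink to
  its anchor.\<close>

lemma finite_bad_cells:
  assumes V: "V \<in> cyclic" and \<epsilon>: "\<epsilon> > 0"
  shows "finite {(P, k). P \<in> \<P> \<and> (p ^^ Suc k) P = V \<and> \<not> cell P k \<subseteq> ball (shift (anchor V)) \<epsilon>}"
    (is "finite ?B")
proof -
  define W where "W = inv_into cyclic p V"
  have W: "W \<in> cyclic" "p W = V" "shift (anchor V) = anchor W"
    using predecessor_in_cyclic[OF V] shift_anchor[OF V] unfolding W_def by auto
  obtain N where N: "\<And>P k. P \<in> \<P> \<Longrightarrow> N \<le> k \<Longrightarrow> (p ^^ k) P \<in> periodic_points p"
    using eventually_periodic_iterates[of \<P> p, OF finite_partition p_into] by metis
  have "?B \<subseteq> \<P> \<times> {..<N} \<union> {i \<in> funpow_fibre p \<P> W. \<not> piece W i \<subseteq> ball (anchor W) \<epsilon>}"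
  proof
    fix i assume "i \<in> ?B"
    then obtain P k where i: "i = (P, k)" "P \<in> \<P>" "(p ^^ Suc k) P = V"
        "\<not> cell P k \<subseteq> ball (anchor W) \<epsilon>"
      using W(3) by auto
    show "i \<in> \<P> \<times> {..<N} \<union> {i \<in> funpow_fibre p \<P> W. \<not> piece W i \<subseteq> ball (anchor W) \<epsilon>}"
    proof (cases "k < N")
      case False
      then have "(p ^^ k) P \<in> cyclic"
        using N[OF i(2)] iterate_member[OF i(2)] unfolding cyclic_def by simp
      moreover have "p ((p ^^ k) P) = p W"
        using i(3) W(2) by simp
      ultimately have "(p ^^ k) P = W"
        using W(1) bij_betw_cyclic unfolding bij_betw_def inj_on_def by blast
      then show ?thesis
        using i unfolding cell_def funpow_fibre_def by simp
    qed (use i in simp)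
  qed
  moreover have "finite {i \<in> funpow_fibre p \<P> W. \<not> piece W i \<subseteq> ball (anchor W) \<epsilon>}"
    using pieces_cyclic W(1) \<epsilon> unfolding cyclic_def by blast
  ultimately show ?thesis
    using finite_partition by (simp add: finite_subset)
qed

lemma shift_continuity:
  assumes a: "a \<in> anchors" and \<epsilon>: "\<epsilon> > 0"
  shows "\<exists>\<delta>>0. \<forall>P\<in>\<P>. \<forall>k. cell P (Suc k) \<inter> ball a \<delta> \<noteq> {} \<longrightarrow> cell P k \<subseteq> ball (shift a) \<epsilon>"
proof -
  obtain V where V: "V \<in> cyclic" "a = anchor V"
    using a unfolding anchors_def by blast
  define B where "B = {(P, k). P \<in> \<P> \<and> (p ^^ Suc k) P = V \<and> \<not> cell P k \<subseteq> ball (shift a) \<epsilon>}"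
  define Z where "Z = (\<Union>(P, k)\<in>B. cell P (Suc k))"
  have "finite B"
    using finite_bad_cells[OF V(1) \<epsilon>] unfolding B_def V(2) .
  moreover have "closed (cell P k)" if "P \<in> \<P>" for P k
    using cell_props[OF that] cantor clopen_in_closed compact_imp_closed
    unfolding cantor_set_def by blast
  ultimately have "closed Z"
    unfolding Z_def B_def by (intro closed_UN) auto
  moreover have "a \<notin> Z"
    unfolding Z_def B_def using anchors_disjoint a by blast
  moreover obtain U where U: "open U" "V = K \<inter> U"
    using member_clopen V(1) cyclic_subset clopen_in_open_trace by blast
  moreover have "a \<in> U"
    using anchor_in[OF V(1)] U(2) V(2) by blast
  ultimately have "open (U - Z)" "a \<in> U - Z"
    by auto
  then obtain \<delta> where \<delta>: "\<delta> > 0" "ball a \<delta> \<subseteq> U - Z"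
    by (rule openE)
  have "cell P k \<subseteq> ball (shift a) \<epsilon>" if P: "P \<in> \<P>" and x: "x \<in> cell P (Suc k)" "x \<in> ball a \<delta>" for P k x
  proof -
    have "x \<in> V"
      using x \<delta>(2) U(2) cell_subset[OF P] by blast
    moreover have "x \<in> (p ^^ Suc k) P"
      using x(1) cell_props[OF P] by blast
    ultimately have "(p ^^ Suc k) P = V"
      using member_disjoint iterate_member[OF P] V(1) cyclic_subset by blast
    moreover have "x \<notin> Z"
      using x(2) \<delta>(2) by blast
    ultimately show ?thesis
      using P x(1) unfolding Z_def B_def by blast
  qed
  then show ?thesis
    using \<delta>(1) by blast
qed

end

context predecessor_tower
begin

lemma is_cell_tower: "cell_tower K \<P> cell anchors shift"
proof
  show "finite anchors"
    unfolding anchors_def using finite_partition cyclic_subset by (simp add: finite_subset)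
  show "clopen_in K (cell P k) \<and> cell P k \<noteq> {}" if "P \<in> \<P>" for P k
    using cell_props[OF that] by blast
  show "P = P' \<and> k = k'" if "P \<in> \<P>" "P' \<in> \<P>" "cell P k \<inter> cell P' k' \<noteq> {}" for P k P' k'
    using that cell_disjoint by blast
qed (fact cantor finite_partition anchors_disjoint K_eq shift_onto shift_continuity)+

end

lemma predecessor_tower_exists:
  fixes K :: "'a::metric_space set"
  assumes K: "cantor_set K" and \<P>: "finite \<P>" "clopen_partition K K id \<P>"
    and p: "\<And>P. P \<in> \<P> \<Longrightarrow> p P \<in> \<P>"
  obtains anchor piece where "predecessor_tower K \<P> p anchor piece"
proof -
  have member: "clopen_in K Q \<and> Q \<noteq> {}" if "Q \<in> \<P>" for Q
    using \<P>(2) that unfolding clopen_partition_def by simp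
  define good where "good Q a c \<longleftrightarrow> (Q \<in> periodic_points p \<longrightarrow> a \<in> Q
        \<and> clopen_partition K (Q - {a}) c (funpow_fibre p \<P> Q)
        \<and> (\<forall>r>0. finite {i \<in> funpow_fibre p \<P> Q. \<not> c i \<subseteq> ball a r}))
      \<and> (Q \<notin> periodic_points p \<longrightarrow> clopen_partition K Q c (funpow_fibre p \<P> Q))"
    for Q a and c :: "'a set \<times> nat \<Rightarrow> 'a set"
  have "\<exists>a c. good Q a c"
    if Q: "Q \<in> \<P>" for Q
  proof (cases "Q \<in> periodic_points p")
    case True
    obtain a where a: "a \<in> Q"
      using member[OF Q] by blast
    have "countable (\<P> \<times> (UNIV :: nat set))"
      using \<P>(1) by (intro countable_SIGMA) (auto intro: countable_finite)
    moreover have "funpow_fibre p \<P> Q \<subseteq> \<P> \<times> UNIV"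
      unfolding funpow_fibre_def by blast
    ultimately have "countable (funpow_fibre p \<P> Q)"
      by (rule countable_subset[rotated])
    moreover have "infinite (funpow_fibre p \<P> Q)"
      using Q True by (intro infinite_funpow_fibre) simp
    ultimately have "\<exists>c. clopen_partition K (Q - {a}) c (funpow_fibre p \<P> Q)
        \<and> (\<forall>r>0. finite {i \<in> funpow_fibre p \<P> Q. \<not> c i \<subseteq> ball a r})"
      by (rule clopen_partition_punctured[OF K conjunct1[OF member[OF Q]] a])
    then show ?thesis
      using a True unfolding good_def by blast
  next
    case False
    have "(Q, 0) \<in> funpow_fibre p \<P> Q"
      using Q unfolding funpow_fibre_def by simp
    then obtain c where "clopen_partition K Q c (funpow_fibre p \<P> Q)"
      using clopen_partition_finite[OF K _ _ finite_funpow_fibre[of \<P> p Q, OF \<P>(1) p False]]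
        member[OF Q] by blast
    then show ?thesis
      using False unfolding good_def by blast
  qed
  then obtain anchor piece where "\<And>Q. Q \<in> \<P> \<Longrightarrow> good Q (anchor Q) (piece Q)"
    by metis
  then have "predecessor_tower K \<P> p anchor piece"
    using K \<P> p by unfold_locales (auto simp: good_def)
  then show ?thesis
    by (rule that)
qed

lemma finally_periodic_endomorphism_along_graph:
  fixes K :: "'a::metric_space set" and E :: "'a set \<Rightarrow> 'a set \<Rightarrow> bool"
  assumes K: "cantor_set K" and \<P>: "finite \<P>" "clopen_partition K K id \<P>"
    and into: "\<And>Q. Q \<in> \<P> \<Longrightarrow> \<exists>P\<in>\<P>. E P Q" and out: "\<And>P. P \<in> \<P> \<Longrightarrow> \<exists>Q\<in>\<P>. E P Q"
  obtains T where "endomorphism K T" "\<And>x. x \<in> K \<Longrightarrow> finally_periodic T x"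
    "\<And>x. x \<in> K \<Longrightarrow> \<exists>P\<in>\<P>. \<exists>Q\<in>\<P>. x \<in> P \<and> T x \<in> Q \<and> E P Q"
proof -
  obtain p where p: "\<And>Q. Q \<in> \<P> \<Longrightarrow> p Q \<in> \<P> \<and> E (p Q) Q"
    using into by metis
  obtain s where s: "\<And>P. P \<in> \<P> \<Longrightarrow> s P \<in> \<P> \<and> E P (s P)"
    using out by metis
  obtain anchor piece where "predecessor_tower K \<P> p anchor piece"
    using predecessor_tower_exists[OF K \<P>] p by metis
  then interpret predecessor_tower K \<P> p anchor piece .
  interpret cell_tower K \<P> cell anchors shift
    by (rule is_cell_tower)
  obtain T where T: "endomorphism K T" "\<And>x. x \<in> K \<Longrightarrow> finally_periodic T x"
      "\<And>P k x. P \<in> \<P> \<Longrightarrow> x \<in> cell P (Suc k) \<Longrightarrow> T x \<in> cell P k"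
      "\<And>P x. P \<in> \<P> \<Longrightarrow> x \<in> cell P 0 \<Longrightarrow> T x \<in> cell (s P) 0"
      "\<And>a. a \<in> anchors \<Longrightarrow> T a = shift a"
    using tower_map_exists[of s] s by metis
  have "\<exists>P\<in>\<P>. \<exists>Q\<in>\<P>. x \<in> P \<and> T x \<in> Q \<and> E P Q" if x: "x \<in> K" for x
    using x
  proof (cases rule: tower_point_cases)
    case 1
    then show ?thesis
      using shift_edge T(5) p by metis
  next
    case (2 P)
    then show ?thesis
      using T(4) s cell_props by (metis funpow_0 subsetD)
  next
    case (3 P k)
    then have "x \<in> (p ^^ Suc k) P" "T x \<in> (p ^^ k) P"
      using T(3)[OF 3] cell_props[OF 3(1)] by blast+
    then have "x \<in> p ((p ^^ k) P)" "T x \<in> (p ^^ k) P"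
      by simp_all
    then show ?thesis
      using p iterate_member[OF 3(1)] by blast
  qed
  then show ?thesis
    using that T(1,2) by blast
qed

lemma SUP_less_if_compact:
  fixes f :: "'a::topological_space \<Rightarrow> real"
  assumes "compact S" "S \<noteq> {}" "continuous_on S f" "\<And>x. x \<in> S \<Longrightarrow> f x < c"
  shows "(SUP x\<in>S. f x) < c"
proof -
  obtain x where x: "x \<in> S" "\<And>y. y \<in> S \<Longrightarrow> f y \<le> f x"
    using continuous_attains_sup[OF assms(1-3)] by blast
  then have "(SUP x\<in>S. f x) = f x"
    by (intro cSup_eq_maximum) auto
  then show ?thesis
    using assms(4)[OF x(1)] by simp
qed

lemma image_meets_partition:
  assumes T: "T ` K = K" and \<P>: "\<Union>\<P> = K" "\<And>P. P \<in> \<P> \<Longrightarrow> P \<noteq> {}"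
  shows "\<And>Q. Q \<in> \<P> \<Longrightarrow> \<exists>P\<in>\<P>. T ` P \<inter> Q \<noteq> {}"
    and "\<And>P. P \<in> \<P> \<Longrightarrow> \<exists>Q\<in>\<P>. T ` P \<inter> Q \<noteq> {}"
proof -
  fix Q assume Q: "Q \<in> \<P>"
  then obtain y where "y \<in> Q"
    using \<P>(2) by blast
  moreover have "y \<in> T ` K"
    using \<open>y \<in> Q\<close> Q \<P>(1) T by blast
  ultimately obtain x P where "P \<in> \<P>" "x \<in> P" "T x \<in> Q"
    using \<P>(1) by auto
  then show "\<exists>P\<in>\<P>. T ` P \<inter> Q \<noteq> {}"
    by blast
next
  fix P assume P: "P \<in> \<P>"
  then obtain x where "x \<in> P"
    using \<P>(2) by blast
  moreover have "T x \<in> K"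
    using \<open>x \<in> P\<close> P \<P>(1) T by blast
  ultimately obtain Q where "Q \<in> \<P>" "T x \<in> Q"
    using \<P>(1) by auto
  then show "\<exists>Q\<in>\<P>. T ` P \<inter> Q \<noteq> {}"
    using \<open>x \<in> P\<close> by blast
qed

theorem theorem1p1:
  fixes K :: "'a::metric_space set" and T :: "'a \<Rightarrow> 'a" and \<epsilon> :: real
  assumes "cantor_set K" and "endomorphism K T" and "\<epsilon> > 0"
  shows "\<exists>T'. endomorphism K T' \<and> (SUP x\<in>K. dist (T x) (T' x)) < \<epsilon>
              \<and> (\<forall>x\<in>K. finally_periodic T' x)"
proof -
  have K: "compact K" "K \<noteq> {}" and T: "continuous_on K T" "T ` K = K"
    using assms(1,2) by (auto simp: cantor_set_def endomorphism_def)
  obtain \<delta> where \<delta>: "\<delta> > 0" "\<And>x y. x \<in> K \<Longrightarrow> y \<in> K \<Longrightarrow> dist y x < \<delta> \<Longrightarrow> dist (T y) (T x) < \<epsilon>/2"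
    using uniformly_continuous_onE[OF compact_uniformly_continuous[OF T(1) K(1)]
        half_gt_zero[OF assms(3)]] by blast
  obtain \<P> where \<P>: "finite \<P>" "clopen_partition K K id \<P>"
      "\<And>P x y. P \<in> \<P> \<Longrightarrow> x \<in> P \<Longrightarrow> y \<in> P \<Longrightarrow> dist x y < min \<delta> (\<epsilon>/2)"
    using small_clopen_partition[OF assms(1), of "min \<delta> (\<epsilon>/2)"] \<delta>(1) assms(3) by auto
  have cover: "\<Union>\<P> = K" "\<And>P. P \<in> \<P> \<Longrightarrow> P \<noteq> {}"
    using \<P>(2) unfolding clopen_partition_def by auto
  obtain T' where T': "endomorphism K T'" "\<And>x. x \<in> K \<Longrightarrow> finally_periodic T' x"
      "\<And>x. x \<in> K \<Longrightarrow> \<exists>P\<in>\<P>. \<exists>Q\<in>\<P>. x \<in> P \<and> T' x \<in> Q \<and> T ` P \<inter> Q \<noteq> {}"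
  proof (rule finally_periodic_endomorphism_along_graph[OF assms(1) \<P>(1,2),
        where E = "\<lambda>P Q. T ` P \<inter> Q \<noteq> {}"])
    show "\<exists>P\<in>\<P>. T ` P \<inter> Q \<noteq> {}" if "Q \<in> \<P>" for Q
      using image_meets_partition(1)[OF T(2) cover that] .
    show "\<exists>Q\<in>\<P>. T ` P \<inter> Q \<noteq> {}" if "P \<in> \<P>" for P
      using image_meets_partition(2)[OF T(2) cover that] .
  qed (use that in blast)
  have "dist (T x) (T' x) < \<epsilon>" if x: "x \<in> K" for x
  proof -
    obtain P Q z where PQ: "P \<in> \<P>" "Q \<in> \<P>" "x \<in> P" "T' x \<in> Q" "z \<in> P" "T z \<in> Q"
      using T'(3)[OF x] by blast
    have "z \<in> K"
      using cover(1) PQ(1,5) by blast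
    moreover have "dist z x < \<delta>"
      using \<P>(3)[OF PQ(1) PQ(5) PQ(3)] by simp
    ultimately have "dist (T z) (T x) < \<epsilon>/2"
      using \<delta>(2)[OF x] by blast
    then have "dist (T x) (T z) < \<epsilon>/2"
      by (simp add: dist_commute)
    moreover have "dist (T' x) (T z) < \<epsilon>/2"
      using \<P>(3)[OF PQ(2) PQ(4) PQ(6)] by simp
    ultimately show ?thesis
      by (rule dist_triangle_half_l)
  qed
  moreover have "continuous_on K (\<lambda>x. dist (T x) (T' x))"
    using T(1) T'(1) unfolding endomorphism_def by (intro continuous_on_dist) auto
  ultimately have "(SUP x\<in>K. dist (T x) (T' x)) < \<epsilon>"
    using SUP_less_if_compact[OF K] by blast
  then show ?thesis
    using T'(1,2) by blast
qed

end
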